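(* Assume (A1)–(A4). There is a constant $K$ independent of $N$ such that for every $1\le i\le N$, $$\mathbb E\Big[\sup_{0\le t\le T}\big|\beta^*(t,\bar x_i(t),\bar x^{(N)}(t))-\bar\beta_N(t,\bar x_i(t),\bar x^{(N)}(t))\big|^2\Big]\le\frac K{N^2},$$ where $\bar x_i$ is the optimal state of Problem (LP).
   Context: For each $N\ge1$: on a complete filtered probability space, $W^0,W_1,\dots,W_N$ are independent 1-d Brownian motions; filtration generated by them and an independent $\mathcal F_0$. Data (independent of $N$): $T>0$, real constants $A,B,Q,R,G,\sigma,\sigma_0$, $a,b,q,r,g:\mathbb R\to\mathbb R$; primes denote derivatives. (A1) $Q,R,G,\sigma\ge0$, $\sigma_0>0$, $R>0$; $a,b,q,r,g$ bounded $C^2$ with bounded first and second derivatives. (A2) $\xi_1,\dots,\xi_N$ i.i.d., $\mathcal F_0$-measurable, fixed common law with finite second moment. (A3) $\exists\varepsilon_0>0$: $|R+\tfrac12r''(v)+yb''(v)|\ge\varepsilon_0$ for all $v,y$. $\rho$: the $C^1$ function with bounded derivative with $R\rho(y)+\tfrac12r'(\rho(y))+(B+b'(\rho(y)))y=0$. $P\ge0$ solves $\dot P+2AP+Q-R^{-1}B^2P^2=0$, $P(T)=G$. (A4) $a'(v)P(t)\ge R^{-1}Bb'(v)P(t)^2$, $B^2+Bb'(v)\ge0$ for all $t,v$. $k(t,x,y):=\rho(P(t)x+y)$, $\tilde b(t,x,y):=b(k(t,x,y))$. For $\theta\ge0$, PDE $\mathcal L_\theta$: $\partial_tF+\partial_xF[Ax+a(x)+Bk(t,x,F)+\tilde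 b(t,x,F)]+P(t)[a(x)+R^{-1}B^2P(t)x+Bk(t,x,F)+\tilde b(t,x,F)+a'(x)x]+\tfrac12(\theta+\sigma_0^2)\partial_{xx}F+\tfrac12q'(x)+(A+a'(x))F=0$, $F(T,x)=\tfrac12g'(x)$. $\Phi$, resp. $\Psi_N$, is its unique $C^{1,2}$ solution with bounded first and second $x$-derivatives for $\theta=0$, resp. $\theta=\sigma^2/N$. Feedback maps: $\beta^*(t,x,y):=-R^{-1}BP(t)(x-y)+k(t,y,\Phi(t,y))$ and $\bar\beta_N(t,x,y):=-R^{-1}BP(t)(x-y)+k(t,y,\Psi_N(t,y))$. Optimal states of Problem (LP): $\bar x_i$ solve $d\bar x_i=\{A\bar x_i+a(\bar x^{(N)})+B\bar\beta_N(t,\bar x_i,\bar x^{(N)})+b(k(t,\bar x^{(N)},\Psi_N(t,\bar x^{(N)})))\}dt+\sigma dW_i+\sigma_0dW^0$, $\bar x_i(0)=\xi_i$, with $\bar x^{(N)}=\frac1N\sum_i\bar x_i$ (the optimal controls are $\bar u_i=\bar\beta_N(t,\bar x_i,\bar x^{(N)})$). *)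

theory Defs
  imports "HOL-Probability.Probability"
begin

definition C2_bounded :: "(real \<Rightarrow> real) \<Rightarrow> bool" where
  "C2_bounded f \<longleftrightarrow>
     (\<forall>x. (f has_real_derivative deriv f x) (at x)) \<and>
     (\<forall>x. (deriv f has_real_derivative deriv (deriv f) x) (at x)) \<and>
     continuous_on UNIV (deriv (deriv f)) \<and>
     bounded (range f) \<and> bounded (range (deriv f)) \<and> bounded (range (deriv (deriv f)))"

definition kfun :: "(real \<Rightarrow> real) \<Rightarrow> (real \<Rightarrow> real) \<Rightarrow> real \<Rightarrow> real \<Rightarrow> real \<Rightarrow> real" where
  "kfun \<rho> P t x y = \<rho> (P t * x + y)"

definition is_pde_solution ::
  "real \<Rightarrow> real \<Rightarrow> real \<Rightarrow> real \<Rightarrow> real \<Rightarrow> (real \<Rightarrow> real) \<Rightarrow> (real \<Rightarrow> real) \<Rightarrow>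
   (real \<Rightarrow> real) \<Rightarrow> (real \<Rightarrow> real) \<Rightarrow> (real \<Rightarrow> real) \<Rightarrow> (real \<Rightarrow> real) \<Rightarrow> real \<Rightarrow>
   (real \<Rightarrow> real \<Rightarrow> real) \<Rightarrow> bool" where
  "is_pde_solution T A B R \<sigma>0 a b q g \<rho> P \<theta> F \<longleftrightarrow>
    (\<exists>Ft Fx Fxx.
      (\<forall>t\<in>{0..T}. \<forall>x. ((\<lambda>s. F s x) has_real_derivative Ft t x) (at t within {0..T})) \<and>
      (\<forall>t\<in>{0..T}. \<forall>x. (F t has_real_derivative Fx t x) (at x)) \<and>
      (\<forall>t\<in>{0..T}. \<forall>x. (Fx t has_real_derivative Fxx t x) (at x)) \<and>
      continuous_on ({0..T} \<times> UNIV) (\<lambda>(t,x). F t x) \<and>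
      continuous_on ({0..T} \<times> UNIV) (\<lambda>(t,x). Ft t x) \<and>
      continuous_on ({0..T} \<times> UNIV) (\<lambda>(t,x). Fx t x) \<and>
      continuous_on ({0..T} \<times> UNIV) (\<lambda>(t,x). Fxx t x) \<and>
      bounded ((\<lambda>(t,x). Fx t x) ` ({0..T} \<times> UNIV)) \<and>
      bounded ((\<lambda>(t,x). Fxx t x) ` ({0..T} \<times> UNIV)) \<and>
      (\<forall>t\<in>{0..T}. \<forall>x.
         Ft t x
         + Fx t x * (A * x + a x + B * kfun \<rho> P t x (F t x) + b (kfun \<rho> P t x (F t x)))
         + P t * (a x + B\<^sup>2 / R * P t * x + B * kfun \<rho> P t x (F t x)
                  + b (kfun \<rho> P t x (F t x)) + deriv a x * x)
         + (\<theta> + \<sigma>0\<^sup>2) / 2 * Fxx t x + deriv q x / 2 + (A + deriv a x) * F t x = 0) \<and>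
      (\<forall>x. F T x = deriv g x / 2))"

definition brownian_motion :: "'a measure \<Rightarrow> real \<Rightarrow> ('a \<Rightarrow> real \<Rightarrow> real) \<Rightarrow> bool" where
  "brownian_motion M T W \<longleftrightarrow>
    (\<forall>t\<in>{0..T}. (\<lambda>\<omega>. W \<omega> t) \<in> borel_measurable M) \<and>
    (AE \<omega> in M. W \<omega> 0 = 0 \<and> continuous_on {0..T} (W \<omega>)) \<and>
    (\<forall>(n::nat) (s::nat \<Rightarrow> real). 0 \<le> s 0 \<and> s n \<le> T \<and> (\<forall>k<n. s k < s (Suc k)) \<longrightarrow>
       prob_space.indep_vars M (\<lambda>_. borel) (\<lambda>k \<omega>. W \<omega> (s (Suc k)) - W \<omega> (s k)) {..<n} \<and>
       (\<forall>k<n. distributed M lborel (\<lambda>\<omega>. W \<omega> (s (Suc k)) - W \<omega> (s k))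
                 (\<lambda>x. ennreal (normal_density 0 (sqrt (s (Suc k) - s k)) x))))"

definition rv_events :: "'a measure \<Rightarrow> ('a \<Rightarrow> real) \<Rightarrow> 'a set set" where
  "rv_events M X = {X -` A \<inter> space M | A. A \<in> sets borel}"

definition process_events :: "'a measure \<Rightarrow> real \<Rightarrow> ('a \<Rightarrow> real \<Rightarrow> real) \<Rightarrow> 'a set set" where
  "process_events M T W =
     sigma_sets (space M) {(\<lambda>\<omega>. W \<omega> t) -` A \<inter> space M | t A. t \<in> {0..T} \<and> A \<in> sets borel}"

text \<open>Feedback map: -R^{-1} B P(t) (x - y) + k(t, y, F(t,y)); with F = Phi this is beta*,
 with F = Psi_N it is beta-bar_N.\<close>
definition feedback :: "real \<Rightarrow> real \<Rightarrow> (real \<Rightarrow> real) \<Rightarrow> (real \<Rightarrow> real) \<Rightarrow>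
    (real \<Rightarrow> real \<Rightarrow> real) \<Rightarrow> real \<Rightarrow> real \<Rightarrow> real \<Rightarrow> real" where
  "feedback B R \<rho> P F t x y = - (B / R) * P t * (x - y) + kfun \<rho> P t y (F t y)"

definition emp_mean :: "nat \<Rightarrow> (nat \<Rightarrow> 'a \<Rightarrow> real \<Rightarrow> real) \<Rightarrow> 'a \<Rightarrow> real \<Rightarrow> real" where
  "emp_mean N x \<omega> t = (\<Sum>j=1..N. x j \<omega> t) / real N"

text \<open>The N-player setup for Problem (LP): probability space M, initial states xi_1..xi_N,
 common noise W 0 (= W^0), idiosyncratic noises W 1..W N, Psi = Psi_N and optimal states xbar.\<close>
definition LP_setup ::
  "real \<Rightarrow> real \<Rightarrow> real \<Rightarrow> real \<Rightarrow> real \<Rightarrow> real \<Rightarrow>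
   (real \<Rightarrow> real) \<Rightarrow> (real \<Rightarrow> real) \<Rightarrow> (real \<Rightarrow> real) \<Rightarrow> (real \<Rightarrow> real) \<Rightarrow>
   (real \<Rightarrow> real) \<Rightarrow> (real \<Rightarrow> real) \<Rightarrow> real measure \<Rightarrow> nat \<Rightarrow>
   'a measure \<Rightarrow> (nat \<Rightarrow> 'a \<Rightarrow> real) \<Rightarrow> (nat \<Rightarrow> 'a \<Rightarrow> real \<Rightarrow> real) \<Rightarrow>
   (real \<Rightarrow> real \<Rightarrow> real) \<Rightarrow> (nat \<Rightarrow> 'a \<Rightarrow> real \<Rightarrow> real) \<Rightarrow> bool" where
  "LP_setup T A B R \<sigma> \<sigma>0 a b q g \<rho> P \<mu> N M \<xi> W \<Psi> xbar \<longleftrightarrow>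
    prob_space M \<and>
    (\<forall>i\<in>{1..N}. \<xi> i \<in> borel_measurable M \<and> distr M borel (\<xi> i) = \<mu>) \<and>
    (\<forall>j\<in>{0..N}. brownian_motion M T (W j)) \<and>
    prob_space.indep_sets M
      (\<lambda>k. case k of Inl i \<Rightarrow> rv_events M (\<xi> i) | Inr j \<Rightarrow> process_events M T (W j))
      (Inl ` {1..N} \<union> Inr ` {0..N}) \<and>
    is_pde_solution T A B R \<sigma>0 a b q g \<rho> P (\<sigma>\<^sup>2 / real N) \<Psi> \<and>
    (\<forall>i\<in>{1..N}. \<forall>t\<in>{0..T}. (\<lambda>\<omega>. xbar i \<omega> t) \<in> borel_measurable M) \<and>
    (AE \<omega> in M. \<forall>i\<in>{1..N}. continuous_on {0..T} (xbar i \<omega>) \<and>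
       (\<forall>t\<in>{0..T}. xbar i \<omega> t = \<xi> i \<omega>
          + integral {0..t} (\<lambda>s. A * xbar i \<omega> s + a (emp_mean N xbar \<omega> s)
              + B * feedback B R \<rho> P \<Psi> s (xbar i \<omega> s) (emp_mean N xbar \<omega> s)
              + b (kfun \<rho> P s (emp_mean N xbar \<omega> s) (\<Psi> s (emp_mean N xbar \<omega> s))))
          + \<sigma> * W i \<omega> t + \<sigma>0 * W 0 \<omega> t))"

end

theory Submission
  imports Defs
begin

(* The two feedbacks differ only in the term k(t, y, .), evaluated at Phi(t,y) and at Psi_N(t,y);
   since rho is Lipschitz the gap is at most a multiple of |Phi - Psi_N|, so a deterministic bound
   sup |Phi - Psi_N| = O(1/N) bounds the expectation trivially.  Subtracting the two PDEs,
   D = Phi - Psi_N satisfies the backward parabolic inequality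
     |D_t + alpha D_x + kappa D_xx| <= Gamma |D| + (sigma^2 / 2N) sup |Phi_xx|,    D(T) = 0,
   where Gamma comes from the Lipschitz nonlinearity and the bounded derivative Phi_x.  The maximum
   principle on [0,T] x R for functions of linear growth (proved with the penalty
   eps exp(-K t) (1 + x^2)) compares +-D with the supersolution F0 (T - t) exp(Gamma (T - t)),
   which gives |D| <= F0 T exp(Gamma T). *)

lemma DERIV_nonneg_at_right_min:
  fixes g :: "real \<Rightarrow> real"
  assumes der: "(g has_real_derivative d) (at t within {0..T})"
    and t: "0 \<le> t" "t < T"
    and min: "\<And>s. s \<in> {t..T} \<Longrightarrow> g t \<le> g s"
  shows "0 \<le> d"
proof (rule ccontr)
  assume "\<not> 0 \<le> d"
  then obtain e where e: "e > 0" "\<And>h. h > 0 \<Longrightarrow> t + h \<in> {0..T} \<Longrightarrow> h < e \<Longrightarrow> g (t + h) < g t"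
    using has_real_derivative_neg_dec_right[OF der] by force
  define h where "h = min (e / 2) (T - t)"
  have "h > 0" "t + h \<in> {0..T}" "h < e" using e t by (auto simp: h_def)
  then have "g (t + h) < g t" by (rule e(2))
  moreover have "g t \<le> g (t + h)" using min \<open>h > 0\<close> \<open>t + h \<in> {0..T}\<close> by simp
  ultimately show False by simp
qed

lemma DERIV_global_min_second_order:
  fixes f f' :: "real \<Rightarrow> real"
  assumes d1: "\<And>y. (f has_real_derivative f' y) (at y)"
    and d2: "(f' has_real_derivative d) (at x)"
    and min: "\<And>y. f x \<le> f y"
  shows "f' x = 0" "0 \<le> d"
proof -
  show "f' x = 0"
    by (rule DERIV_local_min[OF d1, of 1]) (use min in auto)
  show "0 \<le> d"
  proof (rule ccontr)
    assume "\<not> 0 \<le> d"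
    then obtain e where e: "e > 0" "\<And>h. h > 0 \<Longrightarrow> h < e \<Longrightarrow> f' (x + h) < f' x"
      using DERIV_neg_dec_right[OF d2] by force
    obtain z where z: "x < z" "z < x + e / 2" "f (x + e / 2) - f x = e / 2 * f' z"
      using MVT2[of x "x + e / 2" f f'] e(1) d1 by auto
    have "f' z < 0" using e(2)[of "z - x"] z \<open>f' x = 0\<close> by auto
    then have "e / 2 * f' z < 0" using e(1) by (simp add: mult_pos_neg)
    then have "f (x + e / 2) < f x" using z(3) by simp
    then show False using min[of "x + e / 2"] by simp
  qed
qed

lemma abs_diff_le_of_deriv_bound:
  fixes f f' :: "real \<Rightarrow> real"
  assumes "\<And>y. (f has_real_derivative f' y) (at y)" "\<And>y. \<bar>f' y\<bar> \<le> L"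
  shows "\<bar>f x - f z\<bar> \<le> L * \<bar>x - z\<bar>"
  using field_differentiable_bound[of UNIV f f' L x z] assms
  by (simp add: has_field_derivative_at_within)

lemma lipschitz_of_deriv_bound:
  fixes f f' :: "real \<Rightarrow> real"
  assumes "\<And>y. (f has_real_derivative f' y) (at y)" "bounded (range f')"
  obtains L where "L-lipschitz_on UNIV f"
proof -
  obtain L where "L > 0" "\<And>y. \<bar>f' y\<bar> \<le> L"
    using assms(2) by (auto simp: bounded_pos)
  then have "L-lipschitz_on UNIV f"
    by (intro lipschitz_onI) (auto simp: dist_real_def intro: abs_diff_le_of_deriv_bound[OF assms(1)])
  then show thesis by (rule that)
qed

definition has_parabolic_derivatives ::
  "real \<Rightarrow> (real \<Rightarrow> real \<Rightarrow> real) \<Rightarrow> (real \<Rightarrow> real \<Rightarrow> real) \<Rightarrow>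
   (real \<Rightarrow> real \<Rightarrow> real) \<Rightarrow> (real \<Rightarrow> real \<Rightarrow> real) \<Rightarrow> bool" where
  "has_parabolic_derivatives T u ut ux uxx \<longleftrightarrow>
    (\<forall>t\<in>{0..T}. \<forall>x. ((\<lambda>s. u s x) has_real_derivative ut t x) (at t within {0..T})) \<and>
    (\<forall>t\<in>{0..T}. \<forall>x. (u t has_real_derivative ux t x) (at x)) \<and>
    (\<forall>t\<in>{0..T}. \<forall>x. (ux t has_real_derivative uxx t x) (at x)) \<and>
    continuous_on ({0..T} \<times> UNIV) (\<lambda>(t, x). u t x)"

lemma has_parabolic_derivatives_add:
  assumes "has_parabolic_derivatives T u ut ux uxx" "has_parabolic_derivatives T v vt vx vxx"
  shows "has_parabolic_derivatives T (\<lambda>t x. u t x + v t x) (\<lambda>t x. ut t x + vt t x)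
           (\<lambda>t x. ux t x + vx t x) (\<lambda>t x. uxx t x + vxx t x)"
  using assms continuous_on_add[of "{0..T} \<times> UNIV" "\<lambda>(t, x). u t x" "\<lambda>(t, x). v t x"]
  unfolding has_parabolic_derivatives_def
  by (simp add: case_prod_unfold DERIV_add)

lemma has_parabolic_derivatives_uminus:
  assumes "has_parabolic_derivatives T u ut ux uxx"
  shows "has_parabolic_derivatives T (\<lambda>t x. - u t x) (\<lambda>t x. - ut t x)
           (\<lambda>t x. - ux t x) (\<lambda>t x. - uxx t x)"
  using assms continuous_on_minus[of "{0..T} \<times> UNIV" "\<lambda>(t, x). u t x"]
  unfolding has_parabolic_derivatives_def
  by (simp add: case_prod_unfold DERIV_minus)

lemma has_parabolic_derivatives_diff:
  assumes "has_parabolic_derivatives T u ut ux uxx" "has_parabolic_derivatives T v vt vx vxx"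
  shows "has_parabolic_derivatives T (\<lambda>t x. u t x - v t x) (\<lambda>t x. ut t x - vt t x)
           (\<lambda>t x. ux t x - vx t x) (\<lambda>t x. uxx t x - vxx t x)"
  using has_parabolic_derivatives_add[OF assms(1) has_parabolic_derivatives_uminus[OF assms(2)]]
  by simp

lemma has_parabolic_derivatives_time:
  assumes "\<And>t. t \<in> {0..T} \<Longrightarrow> (\<phi> has_real_derivative \<phi>' t) (at t within {0..T})"
  shows "has_parabolic_derivatives T (\<lambda>t x. \<phi> t) (\<lambda>t x. \<phi>' t) (\<lambda>t x. 0) (\<lambda>t x. 0)"
proof -
  have "continuous_on {0..T} \<phi>"
    using assms by (rule DERIV_continuous_on)
  then have "continuous_on ({0..T} \<times> UNIV) (\<lambda>p::real \<times> real. \<phi> (fst p))"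
    by (rule continuous_on_compose2) (auto intro: continuous_intros)
  then show ?thesis
    using assms unfolding has_parabolic_derivatives_def by (simp add: case_prod_unfold)
qed

lemma has_parabolic_derivatives_exp_scale:
  assumes "has_parabolic_derivatives T u ut ux uxx"
  shows "has_parabolic_derivatives T (\<lambda>t x. exp (\<Gamma> * t) * u t x)
           (\<lambda>t x. exp (\<Gamma> * t) * (ut t x + \<Gamma> * u t x))
           (\<lambda>t x. exp (\<Gamma> * t) * ux t x) (\<lambda>t x. exp (\<Gamma> * t) * uxx t x)"
  unfolding has_parabolic_derivatives_def
proof (intro conjI ballI allI)
  fix t x assume t: "t \<in> {0..T}"
  have "((\<lambda>s. u s x) has_real_derivative ut t x) (at t within {0..T})"
    using assms t unfolding has_parabolic_derivatives_def by blast
  then show "((\<lambda>s. exp (\<Gamma> * s) * u s x) has_real_derivative exp (\<Gamma> * t) * (ut t x + \<Gamma> * u t x))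
      (at t within {0..T})"
    by (auto intro!: derivative_eq_intros simp: algebra_simps)
  show "((\<lambda>x. exp (\<Gamma> * t) * u t x) has_real_derivative exp (\<Gamma> * t) * ux t x) (at x)"
    using assms t unfolding has_parabolic_derivatives_def by (simp add: DERIV_cmult)
  show "((\<lambda>x. exp (\<Gamma> * t) * ux t x) has_real_derivative exp (\<Gamma> * t) * uxx t x) (at x)"
    using assms t unfolding has_parabolic_derivatives_def by (simp add: DERIV_cmult)
next
  have "continuous_on ({0..T} \<times> UNIV) (\<lambda>p::real \<times> real. exp (\<Gamma> * fst p))"
    by (intro continuous_intros)
  from continuous_on_mult[OF this] assms
  show "continuous_on ({0..T} \<times> UNIV) (\<lambda>(t, x). exp (\<Gamma> * t) * u t x)"
    unfolding has_parabolic_derivatives_def by (simp add: case_prod_unfold)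
qed

lemma has_parabolic_derivatives_penalty:
  "has_parabolic_derivatives T (\<lambda>t x. \<epsilon> * (exp (- K * t) * (1 + x\<^sup>2)))
     (\<lambda>t x. - K * \<epsilon> * exp (- K * t) * (1 + x\<^sup>2)) (\<lambda>t x. 2 * \<epsilon> * exp (- K * t) * x)
     (\<lambda>t x. 2 * \<epsilon> * exp (- K * t))"
  unfolding has_parabolic_derivatives_def case_prod_unfold
proof (intro conjI ballI allI)
  fix t x :: real
  show "((\<lambda>s. \<epsilon> * (exp (- K * s) * (1 + x\<^sup>2))) has_real_derivative - K * \<epsilon> * exp (- K * t) * (1 + x\<^sup>2))
      (at t within {0..T})"
    by (auto intro!: derivative_eq_intros)
  show "((\<lambda>x. \<epsilon> * (exp (- K * t) * (1 + x\<^sup>2))) has_real_derivative 2 * \<epsilon> * exp (- K * t) * x) (at x)"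
    by (auto intro!: derivative_eq_intros)
  show "((\<lambda>x. 2 * \<epsilon> * exp (- K * t) * x) has_real_derivative 2 * \<epsilon> * exp (- K * t)) (at x)"
    by (auto intro!: derivative_eq_intros)
qed (intro continuous_intros)

lemma parabolic_min_conditions:
  assumes v: "has_parabolic_derivatives T v vt vx vxx"
    and t1: "0 \<le> t1" "t1 < T"
    and min: "\<And>t x. t \<in> {0..T} \<Longrightarrow> v t1 x1 \<le> v t x"
  shows "0 \<le> vt t1 x1" "vx t1 x1 = 0" "0 \<le> vxx t1 x1"
proof -
  have t1': "t1 \<in> {0..T}" using t1 by simp
  have "((\<lambda>s. v s x1) has_real_derivative vt t1 x1) (at t1 within {0..T})"
    using v t1' unfolding has_parabolic_derivatives_def by blast
  then show "0 \<le> vt t1 x1"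
    by (rule DERIV_nonneg_at_right_min[OF _ t1]) (use min t1 in simp)
  have "\<And>y. (v t1 has_real_derivative vx t1 y) (at y)" "(vx t1 has_real_derivative vxx t1 x1) (at x1)"
    using v t1' unfolding has_parabolic_derivatives_def by blast+
  from DERIV_global_min_second_order[OF this min[OF t1']]
  show "vx t1 x1 = 0" "0 \<le> vxx t1 x1" by auto
qed

lemma strip_min_attained:
  fixes v :: "real \<Rightarrow> real \<Rightarrow> real"
  assumes cont: "continuous_on ({0..T} \<times> UNIV) (\<lambda>(t, x). v t x)"
    and far: "\<And>t x. t \<in> {0..T} \<Longrightarrow> r \<le> \<bar>x\<bar> \<Longrightarrow> 0 \<le> v t x"
    and t0: "t0 \<in> {0..T}" and neg: "v t0 x0 < 0"
  obtains t1 x1 where "t1 \<in> {0..T}" "\<And>t x. t \<in> {0..T} \<Longrightarrow> v t1 x1 \<le> v t x"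
proof -
  define S where "S = {0..T} \<times> {-r..r}"
  have "\<not> r \<le> \<bar>x0\<bar>" using far[OF t0] neg by force
  then have x0: "(t0, x0) \<in> S" using t0 by (auto simp: S_def)
  have "continuous_on S (\<lambda>(t, x). v t x)"
    by (rule continuous_on_subset[OF cont]) (auto simp: S_def)
  moreover have "compact S" unfolding S_def by (intro compact_Times compact_Icc)
  ultimately obtain p where p: "p \<in> S" "\<And>q. q \<in> S \<Longrightarrow> case_prod v p \<le> case_prod v q"
    using continuous_attains_inf[of S "\<lambda>(t, x). v t x"] x0 by blast
  obtain t1 x1 where p_eq: "p = (t1, x1)" by fastforce
  have "v t1 x1 \<le> v t x" if t: "t \<in> {0..T}" for t x
  proof (cases "r \<le> \<bar>x\<bar>")
    case True
    have "v t1 x1 \<le> v t0 x0" using p(2)[OF x0] by (simp add: p_eq)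
    then show ?thesis using far[OF t True] neg by linarith
  next
    case False
    then have "(t, x) \<in> S" using t by (auto simp: S_def)
    then show ?thesis using p(2) by (force simp: p_eq)
  qed
  moreover have "t1 \<in> {0..T}" using p(1) by (simp add: S_def p_eq)
  ultimately show thesis using that by blast
qed

section \<open>Maximum principle\<close>

lemma quadratic_dominates_linear:
  fixes C \<eta> :: real
  assumes "\<eta> > 0"
  obtains r where "\<And>x. r \<le> \<bar>x\<bar> \<Longrightarrow> C * (1 + \<bar>x\<bar>) \<le> \<eta> * (1 + x\<^sup>2)"
proof -
  have "C * (1 + \<bar>x\<bar>) \<le> \<eta> * (1 + x\<^sup>2)" if x: "max 1 (2 * \<bar>C\<bar> / \<eta>) \<le> \<bar>x\<bar>" for x :: real
  proof -
    have "2 * \<bar>C\<bar> \<le> \<eta> * \<bar>x\<bar>" using x assms by (simp add: field_simps)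
    then have "2 * \<bar>C\<bar> * \<bar>x\<bar> \<le> \<eta> * x\<^sup>2"
      using mult_right_mono[of "2 * \<bar>C\<bar>" "\<eta> * \<bar>x\<bar>" "\<bar>x\<bar>"] by (simp add: power2_eq_square)
    moreover have "C * (1 + \<bar>x\<bar>) \<le> \<bar>C\<bar> * (1 + \<bar>x\<bar>)" by (rule mult_right_mono) auto
    moreover have "\<bar>C\<bar> * (1 + \<bar>x\<bar>) \<le> \<bar>C\<bar> * (2 * \<bar>x\<bar>)" using x by (intro mult_left_mono) auto
    ultimately show ?thesis using assms by (simp add: algebra_simps)
  qed
  then show thesis by (rule that)
qed

lemma mult_double_le_of_linear_growth:
  fixes \<alpha> x c :: real
  assumes "\<bar>\<alpha>\<bar> \<le> c * (1 + \<bar>x\<bar>)"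
  shows "\<alpha> * (2 * x) \<le> 3 * \<bar>c\<bar> * (1 + x\<^sup>2)"
proof -
  have "c * (1 + \<bar>x\<bar>) \<le> \<bar>c\<bar> * (1 + \<bar>x\<bar>)" by (rule mult_right_mono) auto
  then have "\<bar>\<alpha>\<bar> \<le> \<bar>c\<bar> * (1 + \<bar>x\<bar>)" using assms by linarith
  then have "\<bar>\<alpha>\<bar> * (2 * \<bar>x\<bar>) \<le> \<bar>c\<bar> * (1 + \<bar>x\<bar>) * (2 * \<bar>x\<bar>)"
    by (rule mult_right_mono) simp
  then have "\<alpha> * (2 * x) \<le> \<bar>c\<bar> * (1 + \<bar>x\<bar>) * (2 * \<bar>x\<bar>)"
    using abs_ge_self[of "\<alpha> * (2 * x)"] by (simp add: abs_mult)
  also have "\<dots> \<le> \<bar>c\<bar> * (3 * (1 + x\<^sup>2))"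
    unfolding mult.assoc
  proof (rule mult_left_mono)
    have "0 \<le> (\<bar>x\<bar> - 1)\<^sup>2" by simp
    then show "(1 + \<bar>x\<bar>) * (2 * \<bar>x\<bar>) \<le> 3 * (1 + x\<^sup>2)"
      by (simp add: power2_eq_square algebra_simps)
  qed simp
  finally show ?thesis by (simp add: mult.assoc mult.left_commute)
qed

lemma penalized_min_attained:
  fixes u :: "real \<Rightarrow> real \<Rightarrow> real"
  assumes cont: "continuous_on ({0..T} \<times> UNIV) (\<lambda>(t, x). u t x)"
    and growth: "\<And>t x. t \<in> {0..T} \<Longrightarrow> - C * (1 + \<bar>x\<bar>) \<le> u t x"
    and K: "0 \<le> K" and \<epsilon>: "0 < \<epsilon>"
    and t: "t \<in> {0..T}" and neg: "u t x + \<epsilon> * (exp (- K * t) * (1 + x\<^sup>2)) < 0"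
  obtains t1 x1 where "t1 \<in> {0..T}"
    "\<And>s y. s \<in> {0..T} \<Longrightarrow>
       u t1 x1 + \<epsilon> * (exp (- K * t1) * (1 + x1\<^sup>2)) \<le> u s y + \<epsilon> * (exp (- K * s) * (1 + y\<^sup>2))"
proof -
  define v where "v s y = u s y + \<epsilon> * (exp (- K * s) * (1 + y\<^sup>2))" for s y
  obtain r where r: "\<And>y. r \<le> \<bar>y\<bar> \<Longrightarrow> C * (1 + \<bar>y\<bar>) \<le> \<epsilon> * exp (- K * T) * (1 + y\<^sup>2)"
    using quadratic_dominates_linear[of "\<epsilon> * exp (- K * T)" C] \<epsilon> by auto
  have far: "0 \<le> v s y" if s: "s \<in> {0..T}" and y: "r \<le> \<bar>y\<bar>" for s y
  proof -
    have "exp (- K * T) \<le> exp (- K * s)" using s K by (simp add: mult_left_mono)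
    then have "\<epsilon> * exp (- K * T) * (1 + y\<^sup>2) \<le> \<epsilon> * (exp (- K * s) * (1 + y\<^sup>2))"
      using \<epsilon> by (simp add: mult_right_mono add_nonneg_nonneg)
    then show ?thesis using growth[OF s, of y] r[OF y] by (simp add: v_def)
  qed
  have "continuous_on ({0..T} \<times> UNIV) (\<lambda>(s, y). v s y)"
    using cont has_parabolic_derivatives_penalty[of T \<epsilon> K]
      continuous_on_add[of "{0..T} \<times> UNIV" "\<lambda>(s, y). u s y" "\<lambda>(s, y). \<epsilon> * (exp (- K * s) * (1 + y\<^sup>2))"]
    unfolding has_parabolic_derivatives_def by (simp add: v_def case_prod_unfold)
  moreover have "v t x < 0" using neg by (simp add: v_def)
  ultimately obtain t1 x1 where "t1 \<in> {0..T}" and min: "\<And>s y. s \<in> {0..T} \<Longrightarrow> v t1 x1 \<le> v s y"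
    using strip_min_attained[where v = v, OF _ far t] by metis
  then show thesis using that[of t1 x1] by (simp add: v_def)
qed

lemma parabolic_max_principle_nonpos:
  fixes u ut ux uxx \<alpha> c :: "real \<Rightarrow> real \<Rightarrow> real"
  assumes u: "has_parabolic_derivatives T u ut ux uxx"
    and \<kappa>: "0 \<le> \<kappa>"
    and terminal: "\<And>x. 0 \<le> u T x"
    and growth: "\<And>t x. t \<in> {0..T} \<Longrightarrow> - C * (1 + \<bar>x\<bar>) \<le> u t x"
    and drift: "\<And>t x. t \<in> {0..T} \<Longrightarrow> \<bar>\<alpha> t x\<bar> \<le> cA * (1 + \<bar>x\<bar>)"
    and c: "\<And>t x. t \<in> {0..T} \<Longrightarrow> c t x \<le> 0"
    and supersolution:
      "\<And>t x. t \<in> {0..T} \<Longrightarrow> ut t x + \<alpha> t x * ux t x + \<kappa> * uxx t x + c t x * u t x \<le> 0"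
    and t: "t \<in> {0..T}"
  shows "0 \<le> u t x"
proof (rule ccontr)
  assume neg: "\<not> 0 \<le> u t x"
  \<comment> \<open>K is large enough for the penalty to make the operator strictly negative at the minimum.\<close>
  define K where "K = 3 * \<bar>cA\<bar> + 2 * \<kappa> + 1"
  define pen where "pen s y = exp (- K * s) * (1 + y\<^sup>2)" for s y :: real
  define \<epsilon> where "\<epsilon> = - u t x / (2 * pen t x)"
  define v where "v s y = u s y + \<epsilon> * pen s y" for s y
  have K: "0 \<le> K" using \<kappa> by (simp add: K_def)
  have pen_pos: "0 < pen s y" for s y by (simp add: pen_def add_pos_nonneg)
  have \<epsilon>: "0 < \<epsilon>" using neg pen_pos[of t x] by (simp add: \<epsilon>_def divide_neg_pos)
  have vtx: "v t x < 0" using neg pen_pos[of t x] by (simp add: v_def \<epsilon>_def field_simps)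
  have v: "has_parabolic_derivatives T v (\<lambda>s y. ut s y + - K * \<epsilon> * exp (- K * s) * (1 + y\<^sup>2))
      (\<lambda>s y. ux s y + 2 * \<epsilon> * exp (- K * s) * y) (\<lambda>s y. uxx s y + 2 * \<epsilon> * exp (- K * s))"
    using has_parabolic_derivatives_add[OF u has_parabolic_derivatives_penalty]
    unfolding v_def pen_def .
  obtain t1 x1 where t1: "t1 \<in> {0..T}" and "\<And>s y. s \<in> {0..T} \<Longrightarrow>
      u t1 x1 + \<epsilon> * (exp (- K * t1) * (1 + x1\<^sup>2)) \<le> u s y + \<epsilon> * (exp (- K * s) * (1 + y\<^sup>2))"
  proof (rule penalized_min_attained[where u = u and C = C and K = K and \<epsilon> = \<epsilon> and T = T])
    show "continuous_on ({0..T} \<times> UNIV) (\<lambda>(s, y). u s y)"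
      using u unfolding has_parabolic_derivatives_def by blast
    show "\<And>s y. s \<in> {0..T} \<Longrightarrow> - C * (1 + \<bar>y\<bar>) \<le> u s y" by (rule growth)
    show "u t x + \<epsilon> * (exp (- K * t) * (1 + x\<^sup>2)) < 0" using vtx by (simp add: v_def pen_def)
  qed (use K \<epsilon> t that in auto)
  then have min: "\<And>s y. s \<in> {0..T} \<Longrightarrow> v t1 x1 \<le> v s y" by (simp add: v_def pen_def)
  have vmin: "v t1 x1 < 0" using min[OF t, of x] vtx by simp
  have "t1 \<noteq> T"
  proof
    assume "t1 = T"
    then have "0 < v t1 x1" using terminal[of x1] pen_pos[of T x1] \<epsilon> by (simp add: v_def add_nonneg_pos)
    then show False using vmin by simp
  qed
  then have "0 \<le> t1" "t1 < T" using t1 by auto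
  note crit = parabolic_min_conditions[OF v this min]
  define e where "e = exp (- K * t1)"
  define X where "X = 1 + x1\<^sup>2"
  have eX: "0 < e" "1 \<le> X" by (simp_all add: e_def X_def)
  have "\<alpha> t1 x1 * (2 * x1) + 2 * \<kappa> + c t1 x1 * X \<le> (K - 1) * X"
  proof -
    have "\<alpha> t1 x1 * (2 * x1) \<le> 3 * \<bar>cA\<bar> * X"
      unfolding X_def by (rule mult_double_le_of_linear_growth[OF drift[OF t1]])
    moreover have "2 * \<kappa> \<le> 2 * \<kappa> * X" using \<kappa> eX by (simp add: mult_le_cancel_left1)
    moreover have "c t1 x1 * X \<le> 0" using c[OF t1] eX by (simp add: mult_nonpos_nonneg)
    ultimately show ?thesis by (simp add: K_def algebra_simps)
  qed
  then have penalty: "\<epsilon> * e * (- K * X + \<alpha> t1 x1 * (2 * x1) + 2 * \<kappa> + c t1 x1 * X) < 0"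
    using \<epsilon> eX by (intro mult_pos_neg) (auto simp: algebra_simps)
  have "0 \<le> (ut t1 x1 + - K * \<epsilon> * e * X) + \<alpha> t1 x1 * (ux t1 x1 + 2 * \<epsilon> * e * x1)
      + \<kappa> * (uxx t1 x1 + 2 * \<epsilon> * e) + c t1 x1 * v t1 x1"
    using crit \<kappa> c[OF t1] vmin by (simp add: e_def X_def mult_nonpos_nonpos)
  also have "\<dots> = (ut t1 x1 + \<alpha> t1 x1 * ux t1 x1 + \<kappa> * uxx t1 x1 + c t1 x1 * u t1 x1)
      + \<epsilon> * e * (- K * X + \<alpha> t1 x1 * (2 * x1) + 2 * \<kappa> + c t1 x1 * X)"
    by (simp add: v_def pen_def e_def X_def algebra_simps)
  also have "\<dots> < 0" using supersolution[OF t1, of x1] penalty by linarith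
  finally show False by simp
qed

lemma parabolic_max_principle:
  fixes u ut ux uxx \<alpha> c :: "real \<Rightarrow> real \<Rightarrow> real"
  assumes u: "has_parabolic_derivatives T u ut ux uxx"
    and \<kappa>: "0 \<le> \<kappa>"
    and terminal: "\<And>x. 0 \<le> u T x"
    and growth: "\<And>t x. t \<in> {0..T} \<Longrightarrow> - C * (1 + \<bar>x\<bar>) \<le> u t x"
    and drift: "\<And>t x. t \<in> {0..T} \<Longrightarrow> \<bar>\<alpha> t x\<bar> \<le> cA * (1 + \<bar>x\<bar>)"
    and c: "\<And>t x. t \<in> {0..T} \<Longrightarrow> c t x \<le> \<Gamma>"
    and supersolution:
      "\<And>t x. t \<in> {0..T} \<Longrightarrow> ut t x + \<alpha> t x * ux t x + \<kappa> * uxx t x + c t x * u t x \<le> 0"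
    and t: "t \<in> {0..T}"
  shows "0 \<le> u t x"
proof -
  have "0 \<le> exp (\<Gamma> * t) * u t x"
  proof (rule parabolic_max_principle_nonpos[OF has_parabolic_derivatives_exp_scale[OF u] \<kappa> _ _ drift
        _ _ t, where c = "\<lambda>t x. c t x - \<Gamma>" and C = "\<bar>C\<bar> * exp (\<bar>\<Gamma>\<bar> * \<bar>T\<bar>)"])
    fix s y assume s: "s \<in> {0..T}"
    have "\<Gamma> * s \<le> \<bar>\<Gamma>\<bar> * s" using s by (intro mult_right_mono) auto
    also have "\<dots> \<le> \<bar>\<Gamma>\<bar> * \<bar>T\<bar>" using s by (intro mult_left_mono) auto
    finally have "exp (\<Gamma> * s) \<le> exp (\<bar>\<Gamma>\<bar> * \<bar>T\<bar>)" by simp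
    moreover have "- u s y \<le> \<bar>C\<bar> * (1 + \<bar>y\<bar>)"
      using growth[OF s, of y] abs_ge_self[of C] mult_right_mono[of C "\<bar>C\<bar>" "1 + \<bar>y\<bar>"] by simp
    ultimately have "exp (\<Gamma> * s) * - u s y \<le> exp (\<bar>\<Gamma>\<bar> * \<bar>T\<bar>) * (\<bar>C\<bar> * (1 + \<bar>y\<bar>))"
      if "u s y < 0" using that by (intro mult_mono) auto
    then show "- (\<bar>C\<bar> * exp (\<bar>\<Gamma>\<bar> * \<bar>T\<bar>)) * (1 + \<bar>y\<bar>) \<le> exp (\<Gamma> * s) * u s y"
      by (cases "u s y < 0") (auto simp: algebra_simps intro: order_trans[of _ 0])
    show "c s y - \<Gamma> \<le> 0" using c[OF s] by simp
    have "exp (\<Gamma> * s) * (ut s y + \<Gamma> * u s y) + \<alpha> s y * (exp (\<Gamma> * s) * ux s y)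
        + \<kappa> * (exp (\<Gamma> * s) * uxx s y) + (c s y - \<Gamma>) * (exp (\<Gamma> * s) * u s y)
        = exp (\<Gamma> * s) * (ut s y + \<alpha> s y * ux s y + \<kappa> * uxx s y + c s y * u s y)"
      by (simp add: algebra_simps)
    also have "\<dots> \<le> 0" using supersolution[OF s] by (simp add: mult_nonneg_nonpos)
    finally show "exp (\<Gamma> * s) * (ut s y + \<Gamma> * u s y) + \<alpha> s y * (exp (\<Gamma> * s) * ux s y)
        + \<kappa> * (exp (\<Gamma> * s) * uxx s y) + (c s y - \<Gamma>) * (exp (\<Gamma> * s) * u s y) \<le> 0" .
  next
    show "0 \<le> exp (\<Gamma> * T) * u T y" for y using terminal[of y] by simp
  qed
  then show ?thesis by (simp add: zero_le_mult_iff)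
qed

lemma parabolic_upper_bound:
  fixes D Dt Dx Dxx \<alpha> \<gamma> f :: "real \<Rightarrow> real \<Rightarrow> real"
  assumes D: "has_parabolic_derivatives T D Dt Dx Dxx"
    and \<kappa>: "0 \<le> \<kappa>" and \<Gamma>: "0 \<le> \<Gamma>" and F0: "0 \<le> F0"
    and terminal: "\<And>x. D T x \<le> 0"
    and growth: "\<And>t x. t \<in> {0..T} \<Longrightarrow> D t x \<le> C * (1 + \<bar>x\<bar>)"
    and drift: "\<And>t x. t \<in> {0..T} \<Longrightarrow> \<bar>\<alpha> t x\<bar> \<le> cA * (1 + \<bar>x\<bar>)"
    and \<gamma>: "\<And>t x. t \<in> {0..T} \<Longrightarrow> \<bar>\<gamma> t x\<bar> \<le> \<Gamma>"
    and f: "\<And>t x. t \<in> {0..T} \<Longrightarrow> \<bar>f t x\<bar> \<le> F0"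
    and equation:
      "\<And>t x. t \<in> {0..T} \<Longrightarrow> Dt t x + \<alpha> t x * Dx t x + \<kappa> * Dxx t x + \<gamma> t x * D t x = f t x"
    and t: "t \<in> {0..T}"
  shows "D t x \<le> F0 * T * exp (\<Gamma> * T)"
proof -
  define \<phi> where "\<phi> s = F0 * (T - s) * exp (\<Gamma> * (T - s))" for s
  define \<phi>' where "\<phi>' s = - F0 * exp (\<Gamma> * (T - s)) - \<Gamma> * \<phi> s" for s
  have \<phi>_nonneg: "0 \<le> \<phi> s" if "s \<in> {0..T}" for s using that F0 by (simp add: \<phi>_def)
  have "(\<phi> has_real_derivative \<phi>' s) (at s within {0..T})" for s
    unfolding \<phi>_def \<phi>'_def by (auto intro!: derivative_eq_intros simp: algebra_simps)
  then have \<phi>: "has_parabolic_derivatives T (\<lambda>s y. \<phi> s) (\<lambda>s y. \<phi>' s) (\<lambda>s y. 0) (\<lambda>s y. 0)"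
    by (rule has_parabolic_derivatives_time)
  have "0 \<le> \<phi> t - D t x"
  proof (rule parabolic_max_principle[OF has_parabolic_derivatives_diff[OF \<phi> D] \<kappa> _ _ drift _ _ t,
        where c = \<gamma> and \<Gamma> = \<Gamma> and C = C])
    fix s y assume s: "s \<in> {0..T}"
    show "- C * (1 + \<bar>y\<bar>) \<le> \<phi> s - D s y" using growth[OF s, of y] \<phi>_nonneg[OF s] by simp
    show "\<gamma> s y \<le> \<Gamma>" using \<gamma>[OF s, of y] by simp
    have "1 \<le> exp (\<Gamma> * (T - s))" using s \<Gamma> by simp
    then have "F0 * 1 \<le> F0 * exp (\<Gamma> * (T - s))" using F0 by (rule mult_left_mono)
    moreover have "\<gamma> s y * \<phi> s \<le> \<Gamma> * \<phi> s"
      using \<gamma>[OF s, of y] \<phi>_nonneg[OF s] by (intro mult_right_mono) auto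
    ultimately have "\<phi>' s + \<gamma> s y * \<phi> s + F0 \<le> 0" by (simp add: \<phi>'_def)
    then show "\<phi>' s - Dt s y + \<alpha> s y * (0 - Dx s y) + \<kappa> * (0 - Dxx s y) + \<gamma> s y * (\<phi> s - D s y) \<le> 0"
      using equation[OF s, of y] f[OF s, of y] by (simp add: algebra_simps)
  next
    show "0 \<le> \<phi> T - D T y" for y using terminal[of y] by (simp add: \<phi>_def)
  qed
  also have "\<phi> t \<le> F0 * T * exp (\<Gamma> * T)"
    using t F0 \<Gamma> unfolding \<phi>_def by (intro mult_mono) (auto simp: mult_left_mono)
  finally show ?thesis by simp
qed

lemma abs_le_affine_split:
  fixes r d \<Gamma> F0 :: real
  assumes "\<bar>r\<bar> \<le> \<Gamma> * \<bar>d\<bar> + F0" "0 \<le> \<Gamma>" "0 \<le> F0"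
  obtains \<gamma> where "\<bar>\<gamma>\<bar> \<le> \<Gamma>" "\<bar>r + \<gamma> * d\<bar> \<le> F0"
proof (cases "\<bar>r\<bar> \<le> F0")
  case True
  then show thesis using that[of 0] assms by simp
next
  case False
  then have d: "d \<noteq> 0" using assms(1) by auto
  define \<gamma> where "\<gamma> = (sgn r * F0 - r) / d"
  have "\<bar>sgn r * F0 - r\<bar> = \<bar>r\<bar> - F0" using False assms(3) by (auto simp: sgn_if)
  then have "\<bar>\<gamma>\<bar> \<le> \<Gamma>" using assms(1) d by (simp add: \<gamma>_def abs_divide divide_le_eq)
  moreover have "\<bar>r + \<gamma> * d\<bar> \<le> F0" using d assms(3) by (simp add: \<gamma>_def abs_mult)
  ultimately show thesis by (rule that)
qed

lemma parabolic_abs_bound: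
  fixes D Dt Dx Dxx \<alpha> :: "real \<Rightarrow> real \<Rightarrow> real"
  assumes D: "has_parabolic_derivatives T D Dt Dx Dxx"
    and \<kappa>: "0 \<le> \<kappa>" and \<Gamma>: "0 \<le> \<Gamma>" and F0: "0 \<le> F0"
    and terminal: "\<And>x. D T x = 0"
    and growth: "\<And>t x. t \<in> {0..T} \<Longrightarrow> \<bar>D t x\<bar> \<le> C * (1 + \<bar>x\<bar>)"
    and drift: "\<And>t x. t \<in> {0..T} \<Longrightarrow> \<bar>\<alpha> t x\<bar> \<le> cA * (1 + \<bar>x\<bar>)"
    and inequality:
      "\<And>t x. t \<in> {0..T} \<Longrightarrow> \<bar>Dt t x + \<alpha> t x * Dx t x + \<kappa> * Dxx t x\<bar> \<le> \<Gamma> * \<bar>D t x\<bar> + F0"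
    and t: "t \<in> {0..T}"
  shows "\<bar>D t x\<bar> \<le> F0 * T * exp (\<Gamma> * T)"
proof -
  have "\<forall>s y. \<exists>g. s \<in> {0..T} \<longrightarrow> \<bar>g\<bar> \<le> \<Gamma> \<and>
      \<bar>Dt s y + \<alpha> s y * Dx s y + \<kappa> * Dxx s y + g * D s y\<bar> \<le> F0"
    \<comment> \<open>turns the inequality into a linear equation with bounded zeroth-order coefficient\<close>
    using abs_le_affine_split[OF inequality \<Gamma> F0] by metis
  then obtain \<gamma> where \<gamma>: "\<And>s y. s \<in> {0..T} \<Longrightarrow> \<bar>\<gamma> s y\<bar> \<le> \<Gamma> \<and>
      \<bar>Dt s y + \<alpha> s y * Dx s y + \<kappa> * Dxx s y + \<gamma> s y * D s y\<bar> \<le> F0"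
    by metis
  define f where "f s y = Dt s y + \<alpha> s y * Dx s y + \<kappa> * Dxx s y + \<gamma> s y * D s y" for s y
  have "D t x \<le> F0 * T * exp (\<Gamma> * T)"
    by (rule parabolic_upper_bound[OF D \<kappa> \<Gamma> F0 _ _ drift _ _ _ t, where C = C and \<gamma> = \<gamma> and f = f])
       (use terminal growth \<gamma> in \<open>auto simp: f_def abs_le_iff\<close>)
  moreover have "- D t x \<le> F0 * T * exp (\<Gamma> * T)"
    by (rule parabolic_upper_bound[OF has_parabolic_derivatives_uminus[OF D] \<kappa> \<Gamma> F0 _ _ drift _ _ _ t,
          where C = C and \<gamma> = \<gamma> and f = "\<lambda>s y. - f s y"])
       (use terminal growth \<gamma> in \<open>auto simp: f_def abs_le_iff algebra_simps\<close>)
  ultimately show ?thesis by simp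
qed

section \<open>Stability of the PDE in \<open>\<theta>\<close>\<close>

lemma is_pde_solutionE:
  assumes "is_pde_solution T A B R \<sigma>0 a b q g \<rho> P \<theta> F"
  obtains Ft Fx Fxx S1 S2 where "has_parabolic_derivatives T F Ft Fx Fxx"
    "0 \<le> S1" "\<And>t x. t \<in> {0..T} \<Longrightarrow> \<bar>Fx t x\<bar> \<le> S1"
    "0 \<le> S2" "\<And>t x. t \<in> {0..T} \<Longrightarrow> \<bar>Fxx t x\<bar> \<le> S2"
    "\<And>t x. t \<in> {0..T} \<Longrightarrow>
       Ft t x + Fx t x * (A * x + a x + B * \<rho> (P t * x + F t x) + b (\<rho> (P t * x + F t x)))
       + P t * (a x + B\<^sup>2 / R * P t * x + B * \<rho> (P t * x + F t x) + b (\<rho> (P t * x + F t x))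
                + deriv a x * x)
       + (\<theta> + \<sigma>0\<^sup>2) / 2 * Fxx t x + deriv q x / 2 + (A + deriv a x) * F t x = 0"
    "\<And>x. F T x = deriv g x / 2"
proof -
  from assms[unfolded is_pde_solution_def kfun_def] obtain Ft Fx Fxx where
    dt: "\<forall>t\<in>{0..T}. \<forall>x. ((\<lambda>s. F s x) has_real_derivative Ft t x) (at t within {0..T})" and
    dx: "\<forall>t\<in>{0..T}. \<forall>x. (F t has_real_derivative Fx t x) (at x)" and
    dxx: "\<forall>t\<in>{0..T}. \<forall>x. (Fx t has_real_derivative Fxx t x) (at x)" and
    cont: "continuous_on ({0..T} \<times> UNIV) (\<lambda>(t, x). F t x)" and
    bx: "bounded ((\<lambda>(t, x). Fx t x) ` ({0..T} \<times> UNIV))" and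
    bxx: "bounded ((\<lambda>(t, x). Fxx t x) ` ({0..T} \<times> UNIV))" and
    eq: "\<forall>t\<in>{0..T}. \<forall>x.
       Ft t x + Fx t x * (A * x + a x + B * \<rho> (P t * x + F t x) + b (\<rho> (P t * x + F t x)))
       + P t * (a x + B\<^sup>2 / R * P t * x + B * \<rho> (P t * x + F t x) + b (\<rho> (P t * x + F t x))
                + deriv a x * x)
       + (\<theta> + \<sigma>0\<^sup>2) / 2 * Fxx t x + deriv q x / 2 + (A + deriv a x) * F t x = 0" and
    terminal: "\<forall>x. F T x = deriv g x / 2"
    by blast
  obtain S1 where S1: "0 < S1" "\<forall>z \<in> (\<lambda>(t, x). Fx t x) ` ({0..T} \<times> UNIV). norm z \<le> S1"
    using bx unfolding bounded_pos by blast
  obtain S2 where S2: "0 < S2" "\<forall>z \<in> (\<lambda>(t, x). Fxx t x) ` ({0..T} \<times> UNIV). norm z \<le> S2"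
    using bxx unfolding bounded_pos by blast
  show thesis
  proof (rule that[of Ft Fx Fxx S1 S2])
    show "has_parabolic_derivatives T F Ft Fx Fxx"
      using dt dx dxx cont unfolding has_parabolic_derivatives_def by blast
    show "\<bar>Fx t x\<bar> \<le> S1" "\<bar>Fxx t x\<bar> \<le> S2" if "t \<in> {0..T}" for t x
      using S1(2) S2(2) that by auto
  qed (use S1 S2 eq terminal in auto)
qed

lemma linear_growth_of_bounded_space_derivative:
  assumes F: "has_parabolic_derivatives T F Ft Fx Fxx"
    and Fx: "\<And>t x. t \<in> {0..T} \<Longrightarrow> \<bar>Fx t x\<bar> \<le> S"
  obtains C where "\<And>t x. t \<in> {0..T} \<Longrightarrow> \<bar>F t x\<bar> \<le> C * (1 + \<bar>x\<bar>)"
proof -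
  have "continuous_on ({0..T} \<times> UNIV) (\<lambda>(t, x). F t x)"
    using F unfolding has_parabolic_derivatives_def by blast
  then have "continuous_on {0..T} (\<lambda>t. (\<lambda>(t, x). F t x) (t, 0::real))"
    by (rule continuous_on_compose2) (auto intro!: continuous_intros)
  then have "continuous_on {0..T} (\<lambda>t. F t 0)" by simp
  then have "compact ((\<lambda>t. F t 0) ` {0..T})" using compact_Icc by (rule compact_continuous_image)
  then obtain M where M: "\<forall>z \<in> (\<lambda>t. F t 0) ` {0..T}. norm z \<le> M"
    using bounded_iff[THEN iffD1, OF compact_imp_bounded] by blast
  have "\<bar>F t x\<bar> \<le> (\<bar>M\<bar> + \<bar>S\<bar>) * (1 + \<bar>x\<bar>)" if t: "t \<in> {0..T}" for t x
  proof -
    have "\<And>y. (F t has_real_derivative Fx t y) (at y)"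
      using F t unfolding has_parabolic_derivatives_def by blast
    then have "\<bar>F t x - F t 0\<bar> \<le> S * \<bar>x - 0\<bar>"
      by (rule abs_diff_le_of_deriv_bound) (rule Fx[OF t])
    moreover have "\<bar>F t 0\<bar> \<le> M" using M t by auto
    ultimately have "\<bar>F t x\<bar> \<le> M + S * \<bar>x\<bar>" by simp
    also have "\<dots> \<le> \<bar>M\<bar> + \<bar>S\<bar> * \<bar>x\<bar>" by (intro add_mono mult_right_mono) auto
    also have "\<dots> \<le> (\<bar>M\<bar> + \<bar>S\<bar>) * (1 + \<bar>x\<bar>)"
      using mult_nonneg_nonneg[of "\<bar>M\<bar>" "\<bar>x\<bar>"] by (simp add: algebra_simps)
    finally show ?thesis .
  qed
  then show thesis by (rule that)
qed

lemma drift_linear_growth: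
  fixes a b \<rho> P :: "real \<Rightarrow> real" and F :: "real \<Rightarrow> real \<Rightarrow> real"
  assumes a: "bounded (range a)" and b: "bounded (range b)"
    and \<rho>: "L\<rho>-lipschitz_on UNIV \<rho>"
    and P: "\<And>t. t \<in> {0..T} \<Longrightarrow> \<bar>P t\<bar> \<le> SP"
    and F: "\<And>t x. t \<in> {0..T} \<Longrightarrow> \<bar>F t x\<bar> \<le> C * (1 + \<bar>x\<bar>)"
  obtains cA where "\<And>t x. t \<in> {0..T} \<Longrightarrow>
    \<bar>A * x + a x + B * \<rho> (P t * x + F t x) + b (\<rho> (P t * x + F t x))\<bar> \<le> cA * (1 + \<bar>x\<bar>)"
proof -
  obtain Ma Mb where Ma: "0 < Ma" "\<And>x. \<bar>a x\<bar> \<le> Ma" and Mb: "0 < Mb" "\<And>x. \<bar>b x\<bar> \<le> Mb"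
    using a b by (auto simp: bounded_pos)
  define M\<rho> where "M\<rho> = \<bar>\<rho> 0\<bar> + L\<rho> * (\<bar>SP\<bar> + \<bar>C\<bar>)"
  have L\<rho>: "0 \<le> L\<rho>" using \<rho> by (rule lipschitz_on_nonneg)
  have k: "\<bar>\<rho> (P t * x + F t x)\<bar> \<le> M\<rho> * (1 + \<bar>x\<bar>)" if t: "t \<in> {0..T}" for t x
  proof -
    have "\<bar>P t * x + F t x\<bar> \<le> \<bar>SP\<bar> * \<bar>x\<bar> + \<bar>C\<bar> * (1 + \<bar>x\<bar>)"
    proof -
      have "\<bar>P t\<bar> * \<bar>x\<bar> \<le> \<bar>SP\<bar> * \<bar>x\<bar>" using P[OF t] by (intro mult_right_mono) auto
      moreover have "C * (1 + \<bar>x\<bar>) \<le> \<bar>C\<bar> * (1 + \<bar>x\<bar>)" by (intro mult_right_mono) auto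
      ultimately show ?thesis
        using F[OF t, of x] abs_mult[of "P t" x] abs_triangle_ineq[of "P t * x" "F t x"] by linarith
    qed
    also have "\<dots> \<le> (\<bar>SP\<bar> + \<bar>C\<bar>) * (1 + \<bar>x\<bar>)" by (simp add: algebra_simps)
    finally have z: "\<bar>P t * x + F t x\<bar> \<le> (\<bar>SP\<bar> + \<bar>C\<bar>) * (1 + \<bar>x\<bar>)" .
    have "\<bar>\<rho> (P t * x + F t x) - \<rho> 0\<bar> \<le> L\<rho> * \<bar>P t * x + F t x\<bar>"
      using lipschitz_onD[OF \<rho>, of "P t * x + F t x" 0] by (simp add: dist_real_def)
    also have "\<dots> \<le> L\<rho> * ((\<bar>SP\<bar> + \<bar>C\<bar>) * (1 + \<bar>x\<bar>))" using z L\<rho> by (rule mult_left_mono)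
    finally have "\<bar>\<rho> (P t * x + F t x)\<bar> \<le> \<bar>\<rho> 0\<bar> + L\<rho> * ((\<bar>SP\<bar> + \<bar>C\<bar>) * (1 + \<bar>x\<bar>))" by simp
    also have "\<dots> \<le> \<bar>\<rho> 0\<bar> * (1 + \<bar>x\<bar>) + L\<rho> * ((\<bar>SP\<bar> + \<bar>C\<bar>) * (1 + \<bar>x\<bar>))"
      by (simp add: algebra_simps)
    finally show ?thesis by (simp add: M\<rho>_def algebra_simps)
  qed
  have "\<bar>A * x + a x + B * \<rho> (P t * x + F t x) + b (\<rho> (P t * x + F t x))\<bar>
      \<le> (\<bar>A\<bar> + Ma + \<bar>B\<bar> * M\<rho> + Mb) * (1 + \<bar>x\<bar>)" if t: "t \<in> {0..T}" for t x
  proof -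
    have "\<bar>A * x\<bar> \<le> \<bar>A\<bar> * (1 + \<bar>x\<bar>)" by (simp add: abs_mult mult_left_mono)
    moreover have "\<bar>a x\<bar> \<le> Ma * (1 + \<bar>x\<bar>)"
      unfolding distrib_left mult_1_right
      using Ma(2)[of x] mult_nonneg_nonneg[of Ma "\<bar>x\<bar>"] Ma(1) by linarith
    moreover have "\<bar>B * \<rho> (P t * x + F t x)\<bar> \<le> \<bar>B\<bar> * (M\<rho> * (1 + \<bar>x\<bar>))"
      unfolding abs_mult using k[OF t] by (rule mult_left_mono) simp
    moreover have "\<bar>b (\<rho> (P t * x + F t x))\<bar> \<le> Mb * (1 + \<bar>x\<bar>)"
      unfolding distrib_left mult_1_right
      using Mb(2)[of "\<rho> (P t * x + F t x)"] mult_nonneg_nonneg[of Mb "\<bar>x\<bar>"] Mb(1) by linarith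
    ultimately show ?thesis by (simp add: algebra_simps) arith
  qed
  then show thesis by (rule that)
qed

lemma pde_difference_estimate:
  fixes a b q \<rho> :: "real \<Rightarrow> real"
  assumes eq1: "Ft1 + Fx1 * (A * x + a x + B * \<rho> (p * x + y1) + b (\<rho> (p * x + y1)))
       + p * (a x + B\<^sup>2 / R * p * x + B * \<rho> (p * x + y1) + b (\<rho> (p * x + y1)) + deriv a x * x)
       + (\<theta>1 + \<sigma>0\<^sup>2) / 2 * Fxx1 + deriv q x / 2 + (A + deriv a x) * y1 = 0"
    and eq2: "Ft2 + Fx2 * (A * x + a x + B * \<rho> (p * x + y2) + b (\<rho> (p * x + y2)))
       + p * (a x + B\<^sup>2 / R * p * x + B * \<rho> (p * x + y2) + b (\<rho> (p * x + y2)) + deriv a x * x)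
       + (\<theta>2 + \<sigma>0\<^sup>2) / 2 * Fxx2 + deriv q x / 2 + (A + deriv a x) * y2 = 0"
    and \<rho>: "L\<rho>-lipschitz_on UNIV \<rho>" and b: "Lb-lipschitz_on UNIV b"
    and Fx1: "\<bar>Fx1\<bar> \<le> S1" and Fxx1: "\<bar>Fxx1\<bar> \<le> S2" and p: "\<bar>p\<bar> \<le> SP"
    and a': "\<bar>deriv a x\<bar> \<le> Sa"
  shows "\<bar>Ft1 - Ft2 + (A * x + a x + B * \<rho> (p * x + y2) + b (\<rho> (p * x + y2))) * (Fx1 - Fx2)
           + (\<theta>2 + \<sigma>0\<^sup>2) / 2 * (Fxx1 - Fxx2)\<bar>
         \<le> (\<bar>A\<bar> + Sa + (S1 + SP) * ((\<bar>B\<bar> + Lb) * L\<rho>)) * \<bar>y1 - y2\<bar> + \<bar>\<theta>2 - \<theta>1\<bar> / 2 * S2"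
proof -
  define k1 k2 where "k1 = \<rho> (p * x + y1)" and "k2 = \<rho> (p * x + y2)"
  define H where "H = B * (k1 - k2) + (b k1 - b k2)"
  have L: "0 \<le> L\<rho>" "0 \<le> Lb" using \<rho> b by (simp_all add: lipschitz_on_nonneg)
  have k: "\<bar>k1 - k2\<bar> \<le> L\<rho> * \<bar>y1 - y2\<bar>"
    using lipschitz_onD[OF \<rho>, of "p * x + y1" "p * x + y2"] by (simp add: k1_def k2_def dist_real_def)
  have "\<bar>H\<bar> \<le> \<bar>B\<bar> * \<bar>k1 - k2\<bar> + Lb * \<bar>k1 - k2\<bar>"
    using lipschitz_onD[OF b, of k1 k2] abs_triangle_ineq[of "B * (k1 - k2)" "b k1 - b k2"]
    by (simp add: H_def dist_real_def abs_mult)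
  also have "\<dots> = (\<bar>B\<bar> + Lb) * \<bar>k1 - k2\<bar>" by (simp add: algebra_simps)
  also have "\<dots> \<le> (\<bar>B\<bar> + Lb) * (L\<rho> * \<bar>y1 - y2\<bar>)" using k L by (intro mult_left_mono) auto
  finally have H: "\<bar>H\<bar> \<le> (\<bar>B\<bar> + Lb) * L\<rho> * \<bar>y1 - y2\<bar>" by (simp add: mult.assoc)
  have "Ft1 - Ft2 + (A * x + a x + B * k2 + b k2) * (Fx1 - Fx2) + (\<theta>2 + \<sigma>0\<^sup>2) / 2 * (Fxx1 - Fxx2)
      - (- (A + deriv a x) * (y1 - y2) - (Fx1 + p) * H + (\<theta>2 - \<theta>1) / 2 * Fxx1)
      = (Ft1 + Fx1 * (A * x + a x + B * k1 + b k1)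
          + p * (a x + B\<^sup>2 / R * p * x + B * k1 + b k1 + deriv a x * x)
          + (\<theta>1 + \<sigma>0\<^sup>2) / 2 * Fxx1 + deriv q x / 2 + (A + deriv a x) * y1)
      - (Ft2 + Fx2 * (A * x + a x + B * k2 + b k2)
          + p * (a x + B\<^sup>2 / R * p * x + B * k2 + b k2 + deriv a x * x)
          + (\<theta>2 + \<sigma>0\<^sup>2) / 2 * Fxx2 + deriv q x / 2 + (A + deriv a x) * y2)"
    by (simp add: H_def algebra_simps add_divide_distrib diff_divide_distrib)
  then have identity: "Ft1 - Ft2 + (A * x + a x + B * k2 + b k2) * (Fx1 - Fx2)
      + (\<theta>2 + \<sigma>0\<^sup>2) / 2 * (Fxx1 - Fxx2)
      = - (A + deriv a x) * (y1 - y2) - (Fx1 + p) * H + (\<theta>2 - \<theta>1) / 2 * Fxx1"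
    using eq1 eq2 by (simp add: k1_def k2_def)
  have "\<bar>(A + deriv a x) * (y1 - y2)\<bar> \<le> (\<bar>A\<bar> + Sa) * \<bar>y1 - y2\<bar>"
    unfolding abs_mult using a' by (intro mult_right_mono) auto
  moreover have "\<bar>(Fx1 + p) * H\<bar> \<le> (S1 + SP) * ((\<bar>B\<bar> + Lb) * L\<rho> * \<bar>y1 - y2\<bar>)"
    unfolding abs_mult using Fx1 p H by (intro mult_mono) auto
  moreover have "\<bar>(\<theta>2 - \<theta>1) / 2 * Fxx1\<bar> \<le> \<bar>\<theta>2 - \<theta>1\<bar> / 2 * S2"
    using Fxx1 by (simp add: abs_mult mult_left_mono)
  ultimately have "\<bar>- (A + deriv a x) * (y1 - y2) - (Fx1 + p) * H + (\<theta>2 - \<theta>1) / 2 * Fxx1\<bar>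
      \<le> (\<bar>A\<bar> + Sa) * \<bar>y1 - y2\<bar> + (S1 + SP) * ((\<bar>B\<bar> + Lb) * L\<rho> * \<bar>y1 - y2\<bar>)
         + \<bar>\<theta>2 - \<theta>1\<bar> / 2 * S2"
    unfolding mult_minus_left by arith
  then show ?thesis
    unfolding k2_def[symmetric] identity by (simp add: algebra_simps)
qed

lemma pde_solution_stability:
  fixes a b q g \<rho> P :: "real \<Rightarrow> real" and F1 :: "real \<Rightarrow> real \<Rightarrow> real"
  assumes sol1: "is_pde_solution T A B R \<sigma>0 a b q g \<rho> P \<theta>1 F1"
    and a: "bounded (range a)" "bounded (range (deriv a))"
    and b: "bounded (range b)" "Lb-lipschitz_on UNIV b"
    and \<rho>: "L\<rho>-lipschitz_on UNIV \<rho>"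
    and P: "continuous_on {0..T} P"
  obtains K where "\<And>\<theta>2 F2 t x. 0 \<le> \<theta>2 \<Longrightarrow> is_pde_solution T A B R \<sigma>0 a b q g \<rho> P \<theta>2 F2 \<Longrightarrow>
    t \<in> {0..T} \<Longrightarrow> \<bar>F1 t x - F2 t x\<bar> \<le> K * \<bar>\<theta>2 - \<theta>1\<bar>"
proof -
  obtain Ft1 Fx1 Fxx1 S1 S2 where F1: "has_parabolic_derivatives T F1 Ft1 Fx1 Fxx1"
    and S1: "0 \<le> S1" "\<And>t x. t \<in> {0..T} \<Longrightarrow> \<bar>Fx1 t x\<bar> \<le> S1"
    and S2: "0 \<le> S2" "\<And>t x. t \<in> {0..T} \<Longrightarrow> \<bar>Fxx1 t x\<bar> \<le> S2"
    and eq1: "\<And>t x. t \<in> {0..T} \<Longrightarrow>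
       Ft1 t x + Fx1 t x * (A * x + a x + B * \<rho> (P t * x + F1 t x) + b (\<rho> (P t * x + F1 t x)))
       + P t * (a x + B\<^sup>2 / R * P t * x + B * \<rho> (P t * x + F1 t x) + b (\<rho> (P t * x + F1 t x))
                + deriv a x * x)
       + (\<theta>1 + \<sigma>0\<^sup>2) / 2 * Fxx1 t x + deriv q x / 2 + (A + deriv a x) * F1 t x = 0"
    and terminal1: "\<And>x. F1 T x = deriv g x / 2"
    by (rule is_pde_solutionE[OF sol1]) (rule that)
  obtain Sa where Sa: "0 < Sa" "\<And>x. \<bar>deriv a x\<bar> \<le> Sa"
    using a(2) by (auto simp: bounded_pos)
  have "bounded (P ` {0..T})" using compact_continuous_image[OF P compact_Icc] by (rule compact_imp_bounded)
  then obtain SP where SP: "0 < SP" "\<And>t. t \<in> {0..T} \<Longrightarrow> \<bar>P t\<bar> \<le> SP"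
    by (auto simp: bounded_pos)
  define \<Gamma> where "\<Gamma> = \<bar>A\<bar> + Sa + (S1 + SP) * ((\<bar>B\<bar> + Lb) * L\<rho>)"
  have \<Gamma>: "0 \<le> \<Gamma>"
    using Sa S1 SP lipschitz_on_nonneg[OF b(2)] lipschitz_on_nonneg[OF \<rho>] by (simp add: \<Gamma>_def)
  have "\<bar>F1 t x - F2 t x\<bar> \<le> S2 / 2 * T * exp (\<Gamma> * T) * \<bar>\<theta>2 - \<theta>1\<bar>"
    if \<theta>2: "0 \<le> \<theta>2" and sol2: "is_pde_solution T A B R \<sigma>0 a b q g \<rho> P \<theta>2 F2" and t: "t \<in> {0..T}"
    for \<theta>2 F2 t x
  proof -
    obtain Ft2 Fx2 Fxx2 S1' S2' where F2: "has_parabolic_derivatives T F2 Ft2 Fx2 Fxx2"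
      and S1': "\<And>t x. t \<in> {0..T} \<Longrightarrow> \<bar>Fx2 t x\<bar> \<le> S1'"
      and eq2: "\<And>t x. t \<in> {0..T} \<Longrightarrow>
         Ft2 t x + Fx2 t x * (A * x + a x + B * \<rho> (P t * x + F2 t x) + b (\<rho> (P t * x + F2 t x)))
         + P t * (a x + B\<^sup>2 / R * P t * x + B * \<rho> (P t * x + F2 t x) + b (\<rho> (P t * x + F2 t x))
                  + deriv a x * x)
         + (\<theta>2 + \<sigma>0\<^sup>2) / 2 * Fxx2 t x + deriv q x / 2 + (A + deriv a x) * F2 t x = 0"
      and terminal2: "\<And>x. F2 T x = deriv g x / 2"
      by (rule is_pde_solutionE[OF sol2]) (rule that)
    obtain C1 where C1: "\<And>t x. t \<in> {0..T} \<Longrightarrow> \<bar>F1 t x\<bar> \<le> C1 * (1 + \<bar>x\<bar>)"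
      using linear_growth_of_bounded_space_derivative[OF F1 S1(2)] by blast
    obtain C2 where C2: "\<And>t x. t \<in> {0..T} \<Longrightarrow> \<bar>F2 t x\<bar> \<le> C2 * (1 + \<bar>x\<bar>)"
      using linear_growth_of_bounded_space_derivative[OF F2 S1'] by blast
    obtain cA where cA: "\<And>t x. t \<in> {0..T} \<Longrightarrow>
        \<bar>A * x + a x + B * \<rho> (P t * x + F2 t x) + b (\<rho> (P t * x + F2 t x))\<bar> \<le> cA * (1 + \<bar>x\<bar>)"
    proof (rule drift_linear_growth[OF a(1) b(1) \<rho>])
      show "\<And>t. t \<in> {0..T} \<Longrightarrow> \<bar>P t\<bar> \<le> SP" by (rule SP(2))
      show "\<And>t x. t \<in> {0..T} \<Longrightarrow> \<bar>F2 t x\<bar> \<le> C2 * (1 + \<bar>x\<bar>)" by (rule C2)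
    qed (rule that)
    have "\<bar>F1 t x - F2 t x\<bar> \<le> \<bar>\<theta>2 - \<theta>1\<bar> / 2 * S2 * T * exp (\<Gamma> * T)"
    proof (rule parabolic_abs_bound[OF has_parabolic_derivatives_diff[OF F1 F2] _ \<Gamma> _ _ _ cA _ t,
          where \<kappa> = "(\<theta>2 + \<sigma>0\<^sup>2) / 2" and C = "C1 + C2"])
      fix s y assume s: "s \<in> {0..T}"
      show "\<bar>F1 s y - F2 s y\<bar> \<le> (C1 + C2) * (1 + \<bar>y\<bar>)"
        using C1[OF s, of y] C2[OF s, of y] by (simp add: algebra_simps)
      show "\<bar>Ft1 s y - Ft2 s y
            + (A * y + a y + B * \<rho> (P s * y + F2 s y) + b (\<rho> (P s * y + F2 s y))) * (Fx1 s y - Fx2 s y)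
            + (\<theta>2 + \<sigma>0\<^sup>2) / 2 * (Fxx1 s y - Fxx2 s y)\<bar>
          \<le> \<Gamma> * \<bar>F1 s y - F2 s y\<bar> + \<bar>\<theta>2 - \<theta>1\<bar> / 2 * S2"
        unfolding \<Gamma>_def
        by (rule pde_difference_estimate[OF eq1[OF s] eq2[OF s] \<rho> b(2) S1(2)[OF s] S2(2)[OF s]
              SP(2)[OF s] Sa(2)])
    next
      show "F1 T y - F2 T y = 0" for y using terminal1[of y] terminal2[of y] by simp
    qed (use \<theta>2 S2 in auto)
    then show ?thesis by (simp add: algebra_simps)
  qed
  then show thesis by (rule that)
qed

lemma feedback_diff_le:
  assumes "L\<rho>-lipschitz_on UNIV \<rho>"
  shows "\<bar>feedback B R \<rho> P F1 t x y - feedback B R \<rho> P F2 t x y\<bar> \<le> L\<rho> * \<bar>F1 t y - F2 t y\<bar>"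
  using lipschitz_onD[OF assms, of "P t * y + F1 t y" "P t * y + F2 t y"]
  by (simp add: feedback_def kfun_def dist_real_def)

lemma (in prob_space) nn_integral_SUP_le_const:
  assumes "\<And>\<omega> t. t \<in> S \<Longrightarrow> f \<omega> t \<le> c"
  shows "(\<integral>\<^sup>+ \<omega>. (\<Squnion>t\<in>S. ennreal (f \<omega> t)) \<partial>M) \<le> ennreal c"
proof -
  have "(\<integral>\<^sup>+ \<omega>. (\<Squnion>t\<in>S. ennreal (f \<omega> t)) \<partial>M) \<le> (\<integral>\<^sup>+ \<omega>. ennreal c \<partial>M)"
    using assms by (intro nn_integral_mono SUP_least ennreal_leI) auto
  also have "\<dots> = ennreal c" using emeasure_space_1 by simp
  finally show ?thesis .
qed

theorem mainTheorem15:
  fixes T A B Q R G \<sigma> \<sigma>0 :: real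
    and a b q r g \<rho> P :: "real \<Rightarrow> real"
    and \<mu> :: "real measure"
    and \<Phi> :: "real \<Rightarrow> real \<Rightarrow> real"
  assumes T_pos: "T > 0"
    and A1_const: "Q \<ge> 0" "R > 0" "G \<ge> 0" "\<sigma> \<ge> 0" "\<sigma>0 > 0"
    and A1_fun: "C2_bounded a" "C2_bounded b" "C2_bounded q" "C2_bounded r" "C2_bounded g"
    and A2: "prob_space \<mu>" "sets \<mu> = sets borel" "integrable \<mu> (\<lambda>x. x\<^sup>2)"
    and A3: "\<exists>\<epsilon>0>0. \<forall>v y. \<bar>R + deriv (deriv r) v / 2 + y * deriv (deriv b) v\<bar> \<ge> \<epsilon>0"
    and rho_eq: "\<forall>y. R * \<rho> y + deriv r (\<rho> y) / 2 + (B + deriv b (\<rho> y)) * y = 0"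
    and rho_C1: "\<forall>y. (\<rho> has_real_derivative deriv \<rho> y) (at y)"
      "continuous_on UNIV (deriv \<rho>)" "bounded (range (deriv \<rho>))"
    and P_ode: "\<forall>t\<in>{0..T}. (P has_real_derivative
                   (- (2 * A * P t + Q - B\<^sup>2 / R * (P t)\<^sup>2))) (at t within {0..T})"
    and P_end: "P T = G"
    and P_nonneg: "\<forall>t\<in>{0..T}. P t \<ge> 0"
    and A4: "\<forall>t\<in>{0..T}. \<forall>v. deriv a v * P t \<ge> B / R * deriv b v * (P t)\<^sup>2"
      "\<forall>v. B\<^sup>2 + B * deriv b v \<ge> 0"
    and Phi_sol: "is_pde_solution T A B R \<sigma>0 a b q g \<rho> P 0 \<Phi>"
  shows "\<exists>K::real. \<forall>(N::nat) (M::'a measure) \<xi> W \<Psi> xbar.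
           N \<ge> 1 \<and> LP_setup T A B R \<sigma> \<sigma>0 a b q g \<rho> P \<mu> N M \<xi> W \<Psi> xbar \<longrightarrow>
           (\<forall>i\<in>{1..N}.
              (\<integral>\<^sup>+ \<omega>. (\<Squnion>t\<in>{0..T}. ennreal
                  ((feedback B R \<rho> P \<Phi> t (xbar i \<omega> t) (emp_mean N xbar \<omega> t)
                    - feedback B R \<rho> P \<Psi> t (xbar i \<omega> t) (emp_mean N xbar \<omega> t))\<^sup>2)) \<partial>M)
              \<le> ennreal (K / (real N)\<^sup>2))"
proof -
  have a: "bounded (range a)" "bounded (range (deriv a))"
    and b: "\<And>x. (b has_real_derivative deriv b x) (at x)" "bounded (range b)" "bounded (range (deriv b))"
    using A1_fun(1,2) unfolding C2_bounded_def by blast+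
  obtain Lb where Lb: "Lb-lipschitz_on UNIV b" using lipschitz_of_deriv_bound[OF b(1,3)] .
  obtain L\<rho> where L\<rho>: "L\<rho>-lipschitz_on UNIV \<rho>" using lipschitz_of_deriv_bound[OF _ rho_C1(3)] rho_C1(1) by blast
  have "continuous_on {0..T} P" using P_ode by (intro DERIV_continuous_on) auto
  then obtain K where K: "\<And>\<theta> F t x. 0 \<le> \<theta> \<Longrightarrow> is_pde_solution T A B R \<sigma>0 a b q g \<rho> P \<theta> F \<Longrightarrow>
      t \<in> {0..T} \<Longrightarrow> \<bar>\<Phi> t x - F t x\<bar> \<le> K * \<bar>\<theta> - 0\<bar>"
    by (rule pde_solution_stability[OF Phi_sol a b(2) Lb L\<rho>]) (rule that)
  show ?thesis
  proof (intro exI[of _ "(L\<rho> * K * \<sigma>\<^sup>2)\<^sup>2"] allI impI ballI)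
    fix N :: nat and M :: "'a measure" and \<xi> W \<Psi> xbar i
    assume "1 \<le> N \<and> LP_setup T A B R \<sigma> \<sigma>0 a b q g \<rho> P \<mu> N M \<xi> W \<Psi> xbar"
    then have M: "prob_space M" and \<Psi>: "is_pde_solution T A B R \<sigma>0 a b q g \<rho> P (\<sigma>\<^sup>2 / real N) \<Psi>"
      unfolding LP_setup_def by auto
    have "(feedback B R \<rho> P \<Phi> t y z - feedback B R \<rho> P \<Psi> t y z)\<^sup>2 \<le> (L\<rho> * K * \<sigma>\<^sup>2)\<^sup>2 / (real N)\<^sup>2"
      if t: "t \<in> {0..T}" for t y z
    proof -
      have "\<bar>feedback B R \<rho> P \<Phi> t y z - feedback B R \<rho> P \<Psi> t y z\<bar> \<le> L\<rho> * \<bar>\<Phi> t z - \<Psi> t z\<bar>"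
        by (rule feedback_diff_le[OF L\<rho>])
      also have "\<dots> \<le> L\<rho> * (K * (\<sigma>\<^sup>2 / real N))"
        using K[OF _ \<Psi> t, of z] lipschitz_on_nonneg[OF L\<rho>] by (intro mult_left_mono) auto
      finally have "\<bar>feedback B R \<rho> P \<Phi> t y z - feedback B R \<rho> P \<Psi> t y z\<bar>\<^sup>2
          \<le> (L\<rho> * K * \<sigma>\<^sup>2 / real N)\<^sup>2"
        by (intro power_mono) simp_all
      then show ?thesis by (simp add: power_divide)
    qed
    then show "(\<integral>\<^sup>+ \<omega>. (\<Squnion>t\<in>{0..T}. ennreal
        ((feedback B R \<rho> P \<Phi> t (xbar i \<omega> t) (emp_mean N xbar \<omega> t)
          - feedback B R \<rho> P \<Psi> t (xbar i \<omega> t) (emp_mean N xbar \<omega> t))\<^sup>2)) \<partial>M)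
        \<le> ennreal ((L\<rho> * K * \<sigma>\<^sup>2)\<^sup>2 / (real N)\<^sup>2)"
      by (intro prob_space.nn_integral_SUP_le_const[OF M])
  qed
qed

end
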